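(* If a spherical curve $P$ has a trigon of type A, then $r(P)\le 2$.
   Context: A spherical curve is a smooth immersion $P:S^1\to S^2$ whose self-intersections are finitely many transverse double points, called crossings. It is oriented and has at least one crossing. Regions are the components of $S^2\setminus P(S^1)$, and edges are the arcs of the curve between consecutive crossings. A trigon is a region bounded by three edges. The Gauss word is the cyclic word of crossings met in one traversal of the curve; each crossing appears twice. Crossings $a,b$ are interlaced if their occurrences alternate $a\dots b\dots a\dots b$ in the cyclic word, i.e., their chords cross in the chord diagram. Let a trigon have crossings $x,y,z$. Each of its three edges gives a block of two consecutive letters in the Gauss word, one block on each of $\{x,y\}$, $\{y,z\}$, $\{z,x\}$, so the word has the form $B_1W_1B_2W_2B_3W_3$ with the $W_i$ free of $x,y,z$. The trigon's type is determined by how many of the three pairs among $x,y,z$ are interlaced: type A if exactly two pairs are interlaced; type B if exactly one; type C if all three (e.g. $xy\,W_1\,zx\,W_2\,yz\,W_3$, as in the trefoil curve); type D if none (e.g. $xy\,W_1\,yz\,W_2\,zx\,W_3$). A crossing is reducible if no crossing is interlaced with it; equivalently, only three distinct regions meet at it. $P$ is reducible if it has a reducible crossing. The inverse-half-twisted splice $I$ at a crossing $p$ takes the curve with cyclic Gauss word $p\,A\,p\,B$ to the curve with Gauss word $\overline{A}\,B$, where $\overline{A}$ is $A$ reversed. Geometrically, $p$ is smoothed in the unique way giving a single closed curve, and the result is re-oriented. The reductivity $r(P)$ is the minimal number of successive applications of $I$ needed to reach a reducible spherical curve; $r(P)=0$ if $P$ is reducible. *)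

theory Defs
  imports Main
begin

text \<open>
  A spherical curve is encoded by its Gauss word w (a list; the cyclic word is w read
  cyclically, position i being the i-th passage through a crossing) together with
  rotation data s.  Darts (half-edges) are pairs (i, b) with i < length w:
  (i, True) is the outgoing half-edge of passage i, (i, False) the incoming one.
  Edges of the curve join (i, True) with ((i+1) mod L, False).
  Around the crossing with passages i and j, the counterclockwise cyclic order of the
  four half-edges is  In_i, X_j, Out_i, Y_j  where X = Out iff s i; this forces
  s j = (\<not> s i).  Regions are the faces of the resulting map, i.e. the orbits of
  sigma o alpha; the map lies on the sphere iff V - E + F = 2, i.e. F = n + 2.
\<close>

definition partner :: "'a list \<Rightarrow> nat \<Rightarrow> nat" where
  "partner w i = (THE j. j < length w \<and> j \<noteq> i \<and> w ! j = w ! i)"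

definition darts :: "'a list \<Rightarrow> (nat \<times> bool) set" where
  "darts w = {0..<length w} \<times> UNIV"

definition alpha :: "'a list \<Rightarrow> nat \<times> bool \<Rightarrow> nat \<times> bool" where
  "alpha w d = (let L = length w; i = fst d in
     if snd d then ((i + 1) mod L, False) else ((i + L - 1) mod L, True))"

definition sigma :: "'a list \<Rightarrow> (nat \<Rightarrow> bool) \<Rightarrow> nat \<times> bool \<Rightarrow> nat \<times> bool" where
  "sigma w s d = (partner w (fst d), if snd d then \<not> s (fst d) else s (fst d))"

definition face_perm :: "'a list \<Rightarrow> (nat \<Rightarrow> bool) \<Rightarrow> nat \<times> bool \<Rightarrow> nat \<times> bool" where
  "face_perm w s = sigma w s \<circ> alpha w"

text \<open>The region (face) containing dart d, as the set of its boundary darts (one per corner).\<close>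
definition face_of :: "'a list \<Rightarrow> (nat \<Rightarrow> bool) \<Rightarrow> nat \<times> bool \<Rightarrow> (nat \<times> bool) set" where
  "face_of w s d = {(face_perm w s ^^ k) d | k. True}"

definition regions :: "'a list \<Rightarrow> (nat \<Rightarrow> bool) \<Rightarrow> (nat \<times> bool) set set" where
  "regions w s = face_of w s ` darts w"

definition spherical_curve :: "'a list \<Rightarrow> (nat \<Rightarrow> bool) \<Rightarrow> bool" where
  "spherical_curve w s \<longleftrightarrow>
     w \<noteq> [] \<and>
     (\<forall>a \<in> set w. count_list w a = 2) \<and>
     (\<forall>i < length w. s (partner w i) = (\<not> s i)) \<and>
     card (regions w s) = card (set w) + 2"

definition interlaced :: "'a list \<Rightarrow> 'a \<Rightarrow> 'a \<Rightarrow> bool" where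
  "interlaced w a b \<longleftrightarrow> a \<noteq> b \<and>
     (\<exists>i1 j1 i2 j2. i1 < j1 \<and> j1 < i2 \<and> i2 < j2 \<and> j2 < length w \<and>
        ((w ! i1 = a \<and> w ! i2 = a \<and> w ! j1 = b \<and> w ! j2 = b) \<or>
         (w ! i1 = b \<and> w ! i2 = b \<and> w ! j1 = a \<and> w ! j2 = a)))"

definition reducible_crossing :: "'a list \<Rightarrow> 'a \<Rightarrow> bool" where
  "reducible_crossing w a \<longleftrightarrow> a \<in> set w \<and> (\<forall>b. \<not> interlaced w a b)"

definition reducible :: "'a list \<Rightarrow> bool" where
  "reducible w \<longleftrightarrow> (\<exists>a. reducible_crossing w a)"

text \<open>Inverse-half-twisted splice: the cyclic word p A p B becomes rev A B.
  With w = U p A p V (linear representative), B = V U.\<close>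
definition splice :: "'a list \<Rightarrow> 'a \<Rightarrow> 'a list" where
  "splice w p = (let i1 = (LEAST i. i < length w \<and> w ! i = p);
                     i2 = (LEAST i. i1 < i \<and> i < length w \<and> w ! i = p);
                     U = take i1 w;
                     A = take (i2 - i1 - 1) (drop (i1 + 1) w);
                     V = drop (i2 + 1) w
                 in rev A @ V @ U)"

fun splice_seq :: "'a list \<Rightarrow> 'a list \<Rightarrow> 'a list option" where
  "splice_seq w [] = Some w"
| "splice_seq w (p # ps) = (if p \<in> set w then splice_seq (splice w p) ps else None)"

definition reductivity :: "'a list \<Rightarrow> nat" where
  "reductivity w = (LEAST k. \<exists>ps w'. length ps = k \<and> splice_seq w ps = Some w' \<and> reducible w')"

definition is_trigon :: "'a list \<Rightarrow> (nat \<Rightarrow> bool) \<Rightarrow> (nat \<times> bool) set \<Rightarrow> bool" where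
  "is_trigon w s R \<longleftrightarrow> R \<in> regions w s \<and> card R = 3"

definition trigon_crossings :: "'a list \<Rightarrow> (nat \<times> bool) set \<Rightarrow> 'a set" where
  "trigon_crossings w R = (\<lambda>d. w ! fst d) ` R"

definition trigon_type_A :: "'a list \<Rightarrow> (nat \<Rightarrow> bool) \<Rightarrow> (nat \<times> bool) set \<Rightarrow> bool" where
  "trigon_type_A w s R \<longleftrightarrow> is_trigon w s R \<and>
     (\<exists>x y z. distinct [x, y, z] \<and> trigon_crossings w R = {x, y, z} \<and>
        of_bool (interlaced w x y) + of_bool (interlaced w y z) + of_bool (interlaced w z x)
          = (2::nat))"

end

theory Submission
  imports Defs "HOL-Library.Sublist"
begin

(* A type A trigon with crossings x, y, z has three boundary edges, i.e. three blocks
   of two cyclically consecutive letters of the Gauss word, carrying {x,y}, {y,z}, {z,x}.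
   Rotating the word, it takes the normal form  B1 W1 B2 W2 B3 W3  with x, y, z absent from the
   W_i.  The orientation of each block decides whether the pair it carries is interlaced, so
   "exactly two interlaced pairs" leaves three configurations; in each, two explicit
   inverse-half-twisted splices produce a word with a letter occurring twice in a row
   (cyclically), which is a reducible crossing. *)

section \<open>Interlacement as a subsequence condition\<close>

lemma subseq_Cons_left_iff:
  "subseq (x # xs) ys \<longleftrightarrow> (\<exists>U V. ys = U @ x # V \<and> subseq xs V)"
proof (induction ys)
  case Nil then show ?case by simp
next
  case (Cons y ys)
  show ?case
  proof (cases "x = y")
    case True then show ?thesis using Cons by (auto simp: Cons_eq_append_conv intro: subseq_drop_many)
  next
    case False then show ?thesis using Cons by (auto simp: Cons_eq_append_conv)
  qed
qed

lemma subseq_Cons_left_nth: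
  "subseq (x # xs) ys \<longleftrightarrow> (\<exists>i<length ys. ys ! i = x \<and> subseq xs (drop (Suc i) ys))"
  unfolding subseq_Cons_left_iff
proof safe
  fix U V assume "subseq xs V"
  then show "\<exists>i<length (U @ x # V). (U @ x # V) ! i = x \<and> subseq xs (drop (Suc i) (U @ x # V))"
    by (intro exI[of _ "length U"]) simp
next
  fix i assume "i < length ys" "subseq xs (drop (Suc i) ys)"
  then show "\<exists>U V. ys = U @ ys ! i # V \<and> subseq xs V"
    by (intro exI[of _ "take i ys"] exI[of _ "drop (Suc i) ys"]) (simp add: id_take_nth_drop)
qed

(* Index form relative to a suffix drop n ys; iterating it turns subsequence
   membership into increasing index chains. *)
lemma subseq_Cons_drop:
  "subseq (x # xs) (drop n ys) \<longleftrightarrow>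
     (\<exists>i\<ge>n. i < length ys \<and> ys ! i = x \<and> subseq xs (drop (Suc i) ys))"
  unfolding subseq_Cons_left_nth
proof
  assume "\<exists>k<length (drop n ys). drop n ys ! k = x \<and> subseq xs (drop (Suc k) (drop n ys))"
  then obtain k where "k < length ys - n" "ys ! (n + k) = x" "subseq xs (drop (Suc (k + n)) ys)"
    by auto
  then show "\<exists>i\<ge>n. i < length ys \<and> ys ! i = x \<and> subseq xs (drop (Suc i) ys)"
    by (intro exI[of _ "n + k"]) (simp add: add.commute)
next
  assume "\<exists>i\<ge>n. i < length ys \<and> ys ! i = x \<and> subseq xs (drop (Suc i) ys)"
  then obtain i where "n \<le> i" "i < length ys" "ys ! i = x" "subseq xs (drop (Suc i) ys)"
    by blast
  then show "\<exists>k<length (drop n ys). drop n ys ! k = x \<and> subseq xs (drop (Suc k) (drop n ys))"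
    by (intro exI[of _ "i - n"]) simp
qed

lemma alternating_subseq:
  "subseq [a, b, a, b] w \<longleftrightarrow> (\<exists>i1 j1 i2 j2. i1 < j1 \<and> j1 < i2 \<and> i2 < j2 \<and> j2 < length w \<and>
     w ! i1 = a \<and> w ! j1 = b \<and> w ! i2 = a \<and> w ! j2 = b)"
proof -
  have "subseq [a, b, a, b] (drop 0 w) \<longleftrightarrow> (\<exists>i1. i1 < length w \<and> w ! i1 = a \<and>
     (\<exists>j1>i1. j1 < length w \<and> w ! j1 = b \<and> (\<exists>i2>j1. i2 < length w \<and> w ! i2 = a \<and>
     (\<exists>j2>i2. j2 < length w \<and> w ! j2 = b))))"
    unfolding subseq_Cons_drop by (simp add: Suc_le_eq)
  then show ?thesis by fastforce
qed

lemma interlaced_iff_subseq: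
  "interlaced w a b \<longleftrightarrow> a \<noteq> b \<and> (subseq [a, b, a, b] w \<or> subseq [b, a, b, a] w)"
  unfolding interlaced_def alternating_subseq by blast

lemma interlaced_sym: "interlaced w a b = interlaced w b a"
  unfolding interlaced_iff_subseq by blast

lemma subseq_rev: "subseq xs ys \<Longrightarrow> subseq (rev xs) (rev ys)"
  by (induction rule: list_emb.induct) (auto intro: subseq_rev_drop_many list_emb_append_mono)

lemma interlaced_rev: "interlaced (rev w) a b = interlaced w a b"
proof -
  have "subseq xs (rev w) \<longleftrightarrow> subseq (rev xs) w" for xs :: "'a list"
    using subseq_rev[of xs "rev w"] subseq_rev[of "rev xs" w] by auto
  then show ?thesis unfolding interlaced_iff_subseq by auto
qed

lemma subseq_alternating_rotate1:
  assumes "subseq [a, b, a, b] (c # t)"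
  shows "subseq [a, b, a, b] (t @ [c]) \<or> subseq [b, a, b, a] (t @ [c])"
proof (cases "c = a")
  case True
  with assms have "subseq [b, a, b] t \<or> subseq [a, b, a, b] t"
    by (cases "a = b") auto
  then show ?thesis
    using True list_emb_append_mono[of "(=)" "[b, a, b]" t "[a]" "[a]"] subseq_rev_drop_many by auto
next
  case False
  with assms have "subseq [a, b, a, b] t" by simp
  then show ?thesis using subseq_rev_drop_many by blast
qed

lemma interlaced_rotate1_imp: "interlaced w a b \<Longrightarrow> interlaced (rotate1 w) a b"
proof (cases w)
  case (Cons c t)
  assume "interlaced w a b"
  then show ?thesis
    unfolding interlaced_iff_subseq Cons rotate1.simps
    using subseq_alternating_rotate1[of a b c t] subseq_alternating_rotate1[of b a c t] by blast
qed simp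

(* Interlacement is a property of the cyclic word; the converse direction is obtained
   from the forward one by conjugating with reversal. *)
lemma interlaced_rotate1: "interlaced (rotate1 w) a b = interlaced w a b"
proof
  assume "interlaced (rotate1 w) a b"
  then have "interlaced (rotate1 (rev (rotate1 w))) a b"
    by (simp add: interlaced_rotate1_imp interlaced_rev)
  moreover have "rotate1 (rev (rotate1 w)) = rev w" by (cases w) auto
  ultimately show "interlaced w a b" by (simp add: interlaced_rev)
qed (rule interlaced_rotate1_imp)

lemma subseq_filter_iff:
  assumes "\<forall>x\<in>set xs. P x"
  shows "subseq xs (filter P ys) \<longleftrightarrow> subseq xs ys"
proof
  assume "subseq xs ys"
  then have "subseq (filter P xs) (filter P ys)" by (rule subseq_filter)
  then show "subseq xs (filter P ys)" using assms by simp
qed (rule subseq_order.order_trans[OF _ subseq_filter_left])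

lemma interlaced_filter:
  assumes "P a" "P b"
  shows "interlaced (filter P w) a b = interlaced w a b"
  unfolding interlaced_iff_subseq using assms by (simp add: subseq_filter_iff)

lemma not_interlaced_double:
  assumes "a \<notin> set v"
  shows "\<not> interlaced (a # a # v) a b"
proof
  assume "interlaced (a # a # v) a b"
  then have "a \<noteq> b" "subseq [b, a, b] v \<or> subseq [b, a, b, a] v"
    unfolding interlaced_iff_subseq by auto
  then have "subseq [a, b] v \<or> subseq [a, b, a] v" by (auto dest: subseq_Cons')
  then have "subseq [a] v" by (auto dest: subseq_order.order_trans[rotated])
  then show False using assms by (simp add: subseq_singleton_left)
qed

section \<open>Words up to rotation and reversal, and splices\<close>

definition gauss_word :: "'a list \<Rightarrow> bool" where
  "gauss_word w \<longleftrightarrow> (\<forall>a\<in>set w. count_list w a = 2)"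

(* Two linear words represent the same unoriented cyclic Gauss word if one is obtained
   from the other by rotations and reversals. *)
definition equiv_step :: "'a list \<Rightarrow> 'a list \<Rightarrow> bool" where
  "equiv_step w v \<longleftrightarrow> v = rotate1 w \<or> v = rev w"

abbreviation word_equiv :: "'a list \<Rightarrow> 'a list \<Rightarrow> bool" where
  "word_equiv \<equiv> equiv_step\<^sup>*\<^sup>*"

lemma word_equiv_rotate: "word_equiv w (rotate n w)"
  by (induction n) (auto simp: equiv_step_def intro: rtranclp.rtrancl_into_rtrancl)

lemma word_equiv_rev: "word_equiv w (rev w)"
  by (simp add: r_into_rtranclp equiv_step_def)

lemma word_equiv_rotate_back: "word_equiv (rotate n w) w"
proof (cases "w = []")
  case False
  have "rotate (length w - n mod length w) (rotate n w) = rotate (length w - n mod length w + n) w"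
    by (simp add: rotate_rotate)
  also have "\<dots> = w"
  proof -
    have "(length w - n mod length w + n) mod length w
        = (length w - n mod length w + n mod length w) mod length w"
      by (simp add: mod_add_right_eq)
    also have "\<dots> = 0" using False by simp
    finally show ?thesis by (subst rotate_conv_mod) simp
  qed
  finally show ?thesis using word_equiv_rotate[of "rotate n w" "length w - n mod length w"] by simp
qed simp

lemma word_equiv_invariant:
  assumes "\<And>x. P (rotate1 x) = P x" "\<And>x. P (rev x) = P x" "word_equiv w v"
  shows "P v = P w"
  using assms(3) by (induction rule: rtranclp_induct) (auto simp: equiv_step_def assms(1,2))

lemma interlaced_word_equiv: "word_equiv w v \<Longrightarrow> interlaced v a b = interlaced w a b"
  by (rule word_equiv_invariant[where P = "\<lambda>x. interlaced x a b"])
    (auto simp: interlaced_rotate1 interlaced_rev)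

lemma reducible_word_equiv: "word_equiv w v \<Longrightarrow> reducible v = reducible w"
  unfolding reducible_def reducible_crossing_def
  by (rule word_equiv_invariant) (auto simp: interlaced_rotate1 interlaced_rev)

lemma count_list_rotate1: "count_list (rotate1 w) a = count_list w a"
  by (cases w) simp_all

lemma gauss_word_equiv: "word_equiv w v \<Longrightarrow> gauss_word v = gauss_word w"
  unfolding gauss_word_def
  by (rule word_equiv_invariant) (simp_all add: count_list_rotate1)

lemma set_word_equiv: "word_equiv w v \<Longrightarrow> set v = set w"
  by (rule word_equiv_invariant[where P = set]) simp_all

lemma gauss_word_split:
  assumes "gauss_word w" "p \<in> set w"
  obtains U A V where "w = U @ p # A @ p # V" "p \<notin> set U" "p \<notin> set A" "p \<notin> set V"
proof -
  have two: "count_list w p = 2" using assms unfolding gauss_word_def by blast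
  obtain U R where UR: "w = U @ p # R" "p \<notin> set U" using split_list_first[OF assms(2)] by blast
  then have one: "count_list R p = 1" using two by simp
  then have "p \<in> set R" by (metis count_notin zero_neq_one)
  then obtain A V where AV: "R = A @ p # V" "p \<notin> set A"
    using split_list_first[OF \<open>p \<in> set R\<close>] by blast
  then have "p \<notin> set V" using one by (simp add: count_list_0_iff)
  with UR AV show thesis by (intro that[of U A V]) simp_all
qed

lemma splice_split:
  assumes "p \<notin> set U" "p \<notin> set A"
  shows "splice (U @ p # A @ p # V) p = rev A @ V @ U"
proof -
  let ?w = "U @ p # A @ p # V"
  have first: "(LEAST i. i < length ?w \<and> ?w ! i = p) = length U"
  proof (rule Least_equality)
    fix i assume "i < length ?w \<and> ?w ! i = p"
    then show "length U \<le> i" using assms(1) by (metis nth_append nth_mem not_le_imp_less)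
  qed simp
  have second: "(LEAST i. length U < i \<and> i < length ?w \<and> ?w ! i = p) = length U + 1 + length A"
  proof (rule Least_equality)
    fix i assume i: "length U < i \<and> i < length ?w \<and> ?w ! i = p"
    show "length U + 1 + length A \<le> i"
    proof (rule ccontr)
      assume "\<not> ?thesis"
      then have "i - length U - 1 < length A" "?w ! i = A ! (i - length U - 1)"
        using i by (auto simp: nth_append nth_Cons' split: if_splits)
      then show False using i assms(2) by (metis nth_mem)
    qed
  qed (simp add: nth_append)
  show ?thesis unfolding splice_def Let_def first second by simp
qed

lemma splice_rotate1:
  assumes "gauss_word w" "p \<in> set w"
  shows "word_equiv (splice w p) (splice (rotate1 w) p)"
proof -
  obtain U A V where w: "w = U @ p # A @ p # V" "p \<notin> set U" "p \<notin> set A" "p \<notin> set V"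
    using gauss_word_split[OF assms] .
  show ?thesis
  proof (cases U)
    case Nil
    then have "splice (rotate1 w) p = rev V @ A" using w splice_split[of p A V "[]"] by simp
    moreover have "splice w p = rev A @ V" using w Nil splice_split[of p U A V] by simp
    ultimately show ?thesis using word_equiv_rev[of "rev A @ V"] by simp
  next
    case (Cons c U')
    then have "splice (rotate1 w) p = rev A @ V @ c # U'"
      using w splice_split[of p U' A "V @ [c]"] by simp
    moreover have "splice w p = rev A @ V @ c # U'" using w Cons splice_split[of p U A V] by simp
    ultimately show ?thesis by simp
  qed
qed

lemma splice_rev:
  assumes "gauss_word w" "p \<in> set w"
  shows "word_equiv (splice w p) (splice (rev w) p)"
proof -
  obtain U A V where w: "w = U @ p # A @ p # V" "p \<notin> set U" "p \<notin> set A" "p \<notin> set V"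
    using gauss_word_split[OF assms] .
  have "splice (rev w) p = A @ rev U @ rev V"
    using w splice_split[of p "rev V" "rev A" "rev U"] by simp
  also have "\<dots> = rotate (length (rev U @ rev V)) (rev (rev A @ V @ U))"
    using rotate_append[of "rev U @ rev V" A] by simp
  finally have "splice (rev w) p = rotate (length (rev U @ rev V)) (rev (splice w p))"
    using w splice_split[of p U A V] by simp
  then show ?thesis
    using rtranclp_trans[OF word_equiv_rev word_equiv_rotate] by simp
qed

lemma splice_gauss_word:
  assumes "gauss_word w" "p \<in> set w"
  shows "gauss_word (splice w p)" "set (splice w p) = set w - {p}"
proof -
  obtain U A V where w: "w = U @ p # A @ p # V" "p \<notin> set U" "p \<notin> set A" "p \<notin> set V"
    using gauss_word_split[OF assms] .
  have s: "splice w p = rev A @ V @ U" using w splice_split[of p U A V] by simp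
  show set: "set (splice w p) = set w - {p}" using w s by auto
  show "gauss_word (splice w p)" unfolding gauss_word_def
  proof
    fix a assume "a \<in> set (splice w p)"
    then have "a \<in> set w" "count_list (splice w p) a = count_list w a"
      using set w s by auto
    then show "count_list (splice w p) a = 2" using assms(1) unfolding gauss_word_def by simp
  qed
qed

lemma splice_word_equiv:
  assumes "word_equiv w v" "gauss_word w" "p \<in> set w"
  shows "word_equiv (splice w p) (splice v p)"
  using assms
proof (induction rule: rtranclp_induct)
  case (step y z)
  have y: "gauss_word y" "p \<in> set y"
    using gauss_word_equiv[OF step.hyps(1)] set_word_equiv[OF step.hyps(1)] step.prems by simp_all
  have "word_equiv (splice y p) (splice z p)"
    using step.hyps(2) splice_rotate1[OF y] splice_rev[OF y] unfolding equiv_step_def by auto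
  with step.IH[OF step.prems] show ?case by (rule rtranclp_trans)
qed simp

lemma splice_seq_word_equiv:
  assumes "gauss_word w" "word_equiv w v" "splice_seq w ps = Some w'"
  shows "\<exists>v'. splice_seq v ps = Some v' \<and> word_equiv w' v'"
  using assms
proof (induction ps arbitrary: w v)
  case (Cons p ps)
  have p: "p \<in> set w" using Cons.prems(3) by (auto split: if_splits)
  then have "p \<in> set v" using set_word_equiv[OF Cons.prems(2)] by simp
  moreover obtain v' where "splice_seq (splice v p) ps = Some v'" "word_equiv w' v'"
    using Cons.IH[OF splice_gauss_word(1)[OF Cons.prems(1) p]
        splice_word_equiv[OF Cons.prems(2,1) p]] Cons.prems(3) p by auto
  ultimately show ?case by auto
qed simp

definition reducible_within :: "'a list \<Rightarrow> nat \<Rightarrow> bool" where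
  "reducible_within w k \<longleftrightarrow> (\<exists>ps w'. length ps \<le> k \<and> splice_seq w ps = Some w' \<and> reducible w')"

lemma reducible_within_word_equiv:
  assumes "gauss_word w" "word_equiv w v" "reducible_within w k"
  shows "reducible_within v k"
proof -
  obtain ps w' where "length ps \<le> k" "splice_seq w ps = Some w'" "reducible w'"
    using assms(3) unfolding reducible_within_def by blast
  moreover obtain v' where "splice_seq v ps = Some v'" "word_equiv w' v'"
    using splice_seq_word_equiv[OF assms(1,2) \<open>splice_seq w ps = Some w'\<close>] by blast
  ultimately show ?thesis unfolding reducible_within_def
    using reducible_word_equiv[of w' v'] by auto
qed

lemma reductivity_le:
  assumes "reducible_within w k"
  shows "reductivity w \<le> k"
proof -
  obtain ps w' where "length ps \<le> k" "splice_seq w ps = Some w'" "reducible w'"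
    using assms unfolding reducible_within_def by blast
  then have "reductivity w \<le> length ps"
    unfolding reductivity_def by (intro Least_le) blast
  with \<open>length ps \<le> k\<close> show ?thesis by simp
qed

section \<open>Type A trigons in normal form\<close>

lemma reducible_double_letter:
  assumes "a \<notin> set U" "a \<notin> set V"
  shows "reducible (U @ a # a # V)"
proof -
  have "reducible_crossing (a # a # V @ U) a"
    using not_interlaced_double[of a "V @ U"] assms unfolding reducible_crossing_def by auto
  then have "reducible (rotate (length U) (U @ a # a # V))"
    unfolding reducible_def by (auto simp: rotate_append)
  then show ?thesis using reducible_word_equiv[OF word_equiv_rotate] by blast
qed

lemma reducible_end_letters:
  assumes "a \<notin> set V"
  shows "reducible (a # V @ [a])"
  using reducible_double_letter[of a V "[]"] assms
    reducible_word_equiv[OF word_equiv_rotate[of "a # V @ [a]" 1]] by simp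

definition interlace_count :: "'a list \<Rightarrow> 'a \<Rightarrow> 'a \<Rightarrow> 'a \<Rightarrow> nat" where
  "interlace_count w x y z =
     of_bool (interlaced w x y) + of_bool (interlaced w y z) + of_bool (interlaced w z x)"

(* By symmetry of interlacement the count does not depend on how the three crossings are named. *)
lemma interlace_count_perm:
  assumes "distinct [x, y, z]" "distinct [a, b, c]" "{x, y, z} = {a, b, c}"
  shows "interlace_count w x y z = interlace_count w a b c"
proof -
  have "x \<in> {a, b, c}" "y \<in> {a, b, c}" "z \<in> {a, b, c}" using assms(3) by auto
  then show ?thesis using assms(1,2)
    unfolding interlace_count_def
    by (auto simp: interlaced_sym[of w b a] interlaced_sym[of w c b] interlaced_sym[of w a c])
qed

lemma interlaced_via_filter:
  assumes "filter (\<lambda>c. c = a \<or> c = b) w = u"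
  shows "interlaced w a b = interlaced u a b"
  using interlaced_filter[of "\<lambda>c. c = a \<or> c = b" a b w] assms by simp

lemma reducible_within_two_splices:
  assumes "p \<in> set w" "q \<in> set (splice w p)" "reducible (splice (splice w p) q)"
  shows "reducible_within w 2"
proof -
  have "length [p, q] \<le> 2 \<and> splice_seq w [p, q] = Some (splice (splice w p) q)"
    using assms(1,2) by simp
  then show ?thesis unfolding reducible_within_def using assms(3) by blast
qed

(* The three type A configurations of the word B1 W1 B2 W2 B3 W3, each made reducible by two
   explicit splices.  Interlaced pairs {x,y} and {y,z}: splice z then y, leaving x x. *)
lemma type_A_case_xy_yz:
  assumes "distinct [x, y, z]" "set (W1 @ W2 @ W3) \<inter> {x, y, z} = {}"
  shows "reducible_within (y # x # W1 @ z # y # W2 @ z # x # W3) 2"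
proof -
  let ?w = "(y # x # W1) @ z # (y # W2) @ z # (x # W3)"
  have "splice ?w z = rev W2 @ y # (x # W3) @ y # (x # W1)"
    using assms by (subst splice_split) auto
  moreover have "splice (rev W2 @ y # (x # W3) @ y # (x # W1)) y = rev W3 @ x # x # (W1 @ rev W2)"
    using assms by (subst splice_split) auto
  moreover have "reducible (rev W3 @ x # x # (W1 @ rev W2))"
    using assms by (intro reducible_double_letter) auto
  ultimately show ?thesis using reducible_within_two_splices[of z ?w y] by simp
qed

(* Interlaced pairs {x,y} and {z,x}: splice y then x, leaving z z. *)
lemma type_A_case_xy_zx:
  assumes "distinct [x, y, z]" "set (W1 @ W2 @ W3) \<inter> {x, y, z} = {}"
  shows "reducible_within (y # x # W1 @ y # z # W2 @ x # z # W3) 2"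
proof -
  let ?w = "[] @ y # (x # W1) @ y # (z # W2 @ x # z # W3)"
  have "splice ?w y = rev W1 @ x # (z # W2) @ x # (z # W3)"
    using assms by (subst splice_split) auto
  moreover have "splice (rev W1 @ x # (z # W2) @ x # (z # W3)) x = rev W2 @ z # z # (W3 @ rev W1)"
    using assms by (subst splice_split) auto
  moreover have "reducible (rev W2 @ z # z # (W3 @ rev W1))"
    using assms by (intro reducible_double_letter) auto
  ultimately show ?thesis using reducible_within_two_splices[of y ?w x] by simp
qed

(* Interlaced pairs {y,z} and {z,x}: splice x then z, leaving y ... y. *)
lemma type_A_case_yz_zx:
  assumes "distinct [x, y, z]" "set (W1 @ W2 @ W3) \<inter> {x, y, z} = {}"
  shows "reducible_within (x # y # W1 @ z # y # W2 @ x # z # W3) 2"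
proof -
  let ?w = "[] @ x # (y # W1 @ z # y # W2) @ x # (z # W3)"
  have "splice ?w x = (rev W2 @ [y]) @ z # (rev W1 @ [y]) @ z # W3"
    using assms by (subst splice_split) auto
  moreover have "splice ((rev W2 @ [y]) @ z # (rev W1 @ [y]) @ z # W3) z = y # (W1 @ W3 @ rev W2) @ [y]"
    using assms by (subst splice_split) auto
  moreover have "reducible (y # (W1 @ W3 @ rev W2) @ [y])"
    using assms by (intro reducible_end_letters) auto
  ultimately show ?thesis using reducible_within_two_splices[of x ?w z] by simp
qed

(* In a Gauss word B1 W1 B2 W2 B3 W3 whose blocks carry {x,y}, {y,z}, {z,x}, each of x, y, z
   already occurs twice in the blocks, so the words W1, W2, W3 avoid them. *)
lemma three_blocks_free:
  assumes xyz: "distinct [x, y, z]"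
    and gauss: "gauss_word (e0 # e1 # W1 @ e2 # e3 # W2 @ e4 # e5 # W3)"
    and blocks: "{e0, e1} = {x, y}" "{e2, e3} = {y, z}" "{e4, e5} = {z, x}"
  shows "set (W1 @ W2 @ W3) \<inter> {x, y, z} = {}"
proof -
  let ?w = "e0 # e1 # W1 @ e2 # e3 # W2 @ e4 # e5 # W3"
  have "count_list (W1 @ W2 @ W3) c = 0" if c: "c \<in> {x, y, z}" for c
  proof -
    have "c \<in> set ?w" using blocks c by auto
    then have "count_list ?w c = 2" using gauss unfolding gauss_word_def by blast
    moreover have "count_list [e0, e1, e2, e3, e4, e5] c = 2"
      using blocks c xyz by (auto simp: doubleton_eq_iff)
    moreover have "count_list ?w c = count_list [e0, e1, e2, e3, e4, e5] c + count_list (W1 @ W2 @ W3) c"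
      by auto
    ultimately show ?thesis by simp
  qed
  then show ?thesis by (auto simp: count_list_0_iff)
qed

lemma three_blocks_interlacing:
  assumes xyz: "distinct [x, y, z]" and free: "set (W1 @ W2 @ W3) \<inter> {x, y, z} = {}"
    and blocks: "{e0, e1} = {x, y}" "{e2, e3} = {y, z}" "{e4, e5} = {z, x}"
  defines "w \<equiv> e0 # e1 # W1 @ e2 # e3 # W2 @ e4 # e5 # W3"
  shows "interlaced w x y \<longleftrightarrow> e0 = y" "interlaced w y z \<longleftrightarrow> e2 = z"
    "interlaced w z x \<longleftrightarrow> e4 = x"
proof -
  have o: "e0 = x \<and> e1 = y \<or> e0 = y \<and> e1 = x" "e2 = y \<and> e3 = z \<or> e2 = z \<and> e3 = y"
    "e4 = z \<and> e5 = x \<or> e4 = x \<and> e5 = z"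
    using blocks by (auto simp: doubleton_eq_iff)
  have no_pair: "filter (\<lambda>c. c = a \<or> c = b) W = []"
    if "a \<in> {x, y, z}" "b \<in> {x, y, z}" "W \<in> {W1, W2, W3}" for a b W
    using free that by (auto simp: filter_empty_conv)
  have fxy: "filter (\<lambda>c. c = x \<or> c = y) w = [e0, e1, y, x]"
    using o xyz no_pair unfolding w_def by auto
  show "interlaced w x y \<longleftrightarrow> e0 = y"
    unfolding interlaced_via_filter[OF fxy] using o(1) xyz by (auto simp: interlaced_iff_subseq)
  have fyz: "filter (\<lambda>c. c = y \<or> c = z) w = [y, e2, e3, z]"
    using o xyz no_pair unfolding w_def by auto
  show "interlaced w y z \<longleftrightarrow> e2 = z"
    unfolding interlaced_via_filter[OF fyz] using o(2) xyz by (auto simp: interlaced_iff_subseq)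
  have fzx: "filter (\<lambda>c. c = z \<or> c = x) w = [x, z, e4, e5]"
    using o xyz no_pair unfolding w_def by auto
  show "interlaced w z x \<longleftrightarrow> e4 = x"
    unfolding interlaced_via_filter[OF fzx] using o(3) xyz by (auto simp: interlaced_iff_subseq)
qed

lemma type_A_word_reducible_within:
  assumes xyz: "distinct [x, y, z]"
    and gauss: "gauss_word (e0 # e1 # W1 @ e2 # e3 # W2 @ e4 # e5 # W3)"
    and blocks: "{e0, e1} = {x, y}" "{e2, e3} = {y, z}" "{e4, e5} = {z, x}"
    and type_A: "interlace_count (e0 # e1 # W1 @ e2 # e3 # W2 @ e4 # e5 # W3) x y z = 2"
  shows "reducible_within (e0 # e1 # W1 @ e2 # e3 # W2 @ e4 # e5 # W3) 2"
proof -
  have free: "set (W1 @ W2 @ W3) \<inter> {x, y, z} = {}"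
    using three_blocks_free[OF xyz gauss blocks] .
  note pairs = three_blocks_interlacing[OF xyz free blocks]
  have o: "e0 = x \<and> e1 = y \<or> e0 = y \<and> e1 = x" "e2 = y \<and> e3 = z \<or> e2 = z \<and> e3 = y"
    "e4 = z \<and> e5 = x \<or> e4 = x \<and> e5 = z"
    using blocks by (auto simp: doubleton_eq_iff)
  consider "e0 = y" "e2 = z" "e4 \<noteq> x" | "e0 = y" "e2 \<noteq> z" "e4 = x" | "e0 \<noteq> y" "e2 = z" "e4 = x"
    using type_A unfolding interlace_count_def pairs
    by (cases "e0 = y"; cases "e2 = z"; cases "e4 = x") auto
  then show ?thesis
  proof cases
    case 1
    then show ?thesis using type_A_case_xy_yz[OF xyz free] o xyz by auto
  next
    case 2
    then show ?thesis using type_A_case_xy_zx[OF xyz free] o xyz by auto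
  next
    case 3
    then show ?thesis using type_A_case_yz_zx[OF xyz free] o xyz by auto
  qed
qed

section \<open>Bringing the three edges into normal form\<close>

(* Arithmetic of the rotation that moves position t to the front: i goes to (i + L - t) mod L. *)
lemma shift_inverse:
  fixes t L i :: nat
  assumes "t \<le> L" "i < L"
  shows "((i + L - t) mod L + t) mod L = i"
proof -
  have "((i + L - t) mod L + t) mod L = (i + L - t + t) mod L" by (rule mod_add_left_eq)
  also have "\<dots> = i" using assms by simp
  finally show ?thesis .
qed

lemma shift_Suc:
  fixes t L i :: nat
  assumes "t \<le> L"
  shows "(Suc i mod L + L - t) mod L = Suc ((i + L - t) mod L) mod L"
proof -
  have "(Suc i mod L + L - t) mod L = (Suc i mod L + (L - t)) mod L" using assms by simp
  also have "\<dots> = (Suc i + (L - t)) mod L" by (rule mod_add_left_eq)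
  also have "\<dots> = Suc (i + L - t) mod L" using assms by simp
  also have "\<dots> = Suc ((i + L - t) mod L) mod L" by (simp add: mod_Suc_eq)
  finally show ?thesis .
qed

lemma nth_rotate_shift:
  assumes "t < length w" "i < length w"
  shows "rotate t w ! ((i + length w - t) mod length w) = w ! i"
proof -
  have "0 < length w" using assms(2) by linarith
  then have "(i + length w - t) mod length w < length w" by simp
  then show ?thesis using assms shift_inverse[of t "length w" i] by (simp add: nth_rotate add.commute)
qed

lemma six_positions_order:
  fixes q r L :: nat
  assumes "distinct [0, 1, q, Suc q mod L, r, Suc r mod L]" "q < L" "r < L"
  shows "1 < q \<and> 1 < r \<and> Suc q < L \<and> Suc r < L \<and> (Suc q < r \<or> Suc r < q)"
proof -
  have "Suc q \<noteq> L" "Suc r \<noteq> L" using assms(1) by auto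
  then have "Suc q < L" "Suc r < L" using assms(2,3) by simp_all
  moreover have "distinct [0, 1, q, Suc q, r, Suc r]" using assms(1) calculation by simp
  ultimately show ?thesis by auto
qed

lemma split_at_three_blocks:
  assumes "1 < q" "Suc q < r" "Suc r < length w"
  obtains W1 W2 W3 where "w = w!0 # w!1 # W1 @ w!q # w!Suc q # W2 @ w!r # w!Suc r # W3"
proof -
  have cons: "drop i w = w!i # drop (Suc i) w" if "i < length w" for i
    using that by (simp add: Cons_nth_drop_Suc)
  have split: "drop i w = take (j - i) (drop i w) @ drop j w" if "i \<le> j" for i j
    using that by (metis append_take_drop_id drop_drop le_add_diff_inverse2)
  have "0 < length w" using assms(3) by linarith
  then have "w = w!0 # drop 1 w" using cons[of 0] by simp
  also have "drop 1 w = w!1 # drop 2 w" using assms cons[of 1] by (simp add: numeral_2_eq_2)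
  also have "drop 2 w = take (q - 2) (drop 2 w) @ w!q # w!Suc q # drop (Suc (Suc q)) w"
    using assms split[of 2 q] cons[of q] cons[of "Suc q"] by simp
  also have "drop (Suc (Suc q)) w =
      take (r - Suc (Suc q)) (drop (Suc (Suc q)) w) @ w!r # w!Suc r # drop (Suc (Suc r)) w"
    using assms split[of "Suc (Suc q)" r] cons[of r] cons[of "Suc r"] by simp
  finally show thesis by (intro that) simp
qed

lemma rotated_block_positions:
  fixes w :: "'a list"
  defines "nxt \<equiv> \<lambda>t. Suc t mod length w"
  assumes pos: "t0 < length w" "t1 < length w" "t2 < length w"
    and six: "distinct [t0, nxt t0, t1, nxt t1, t2, nxt t2]"
  obtains q r where "1 < q" "1 < r" "Suc q < length w" "Suc r < length w" "Suc q < r \<or> Suc r < q"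
    "{rotate t0 w ! 0, rotate t0 w ! 1} = {w ! t0, w ! nxt t0}"
    "{rotate t0 w ! q, rotate t0 w ! Suc q} = {w ! t1, w ! nxt t1}"
    "{rotate t0 w ! r, rotate t0 w ! Suc r} = {w ! t2, w ! nxt t2}"
proof -
  define L where "L = length w"
  define sh where "sh i = (i + L - t0) mod L" for i
  have L: "1 < L" using six pos unfolding nxt_def L_def by (cases "length w = 1") auto
  then have L0: "0 < length w" unfolding L_def by linarith
  have nth_rot: "rotate t0 w ! sh i = w ! i" if "i < L" for i
    using nth_rotate_shift[OF pos(1)] that unfolding sh_def L_def by simp
  have sh_nxt: "sh (nxt i) = Suc (sh i) mod L" for i
    using shift_Suc[of t0 L i] pos(1) unfolding sh_def nxt_def L_def by simp
  have sh_lt: "sh i < L" for i using L unfolding sh_def by simp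
  have "inj_on sh {..<L}"
    using shift_inverse[of t0 L] pos(1) unfolding sh_def L_def
    by (intro inj_onI) (metis lessThan_iff less_imp_le)
  moreover have "set [t0, nxt t0, t1, nxt t1, t2, nxt t2] \<subseteq> {..<L}"
    using pos L0 unfolding nxt_def L_def by simp
  ultimately have "distinct (map sh [t0, nxt t0, t1, nxt t1, t2, nxt t2])"
    using six by (simp only: distinct_map) (meson inj_on_subset)
  moreover have sh0: "sh t0 = 0" "sh (nxt t0) = 1" using L unfolding sh_nxt by (simp_all add: sh_def)
  ultimately have "distinct [0, 1, sh t1, Suc (sh t1) mod L, sh t2, Suc (sh t2) mod L]"
    using L by (simp add: sh_nxt)
  then have ord: "1 < sh t1 \<and> 1 < sh t2 \<and> Suc (sh t1) < L \<and> Suc (sh t2) < L \<and>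
      (Suc (sh t1) < sh t2 \<or> Suc (sh t2) < sh t1)"
    using six_positions_order sh_lt by blast
  have block: "{rotate t0 w ! sh t, rotate t0 w ! Suc (sh t)} = {w ! t, w ! nxt t}"
    if "t < L" "Suc (sh t) < L" for t
    using nth_rot[OF that(1)] nth_rot[of "nxt t"] sh_nxt[of t] that L0 unfolding nxt_def L_def by simp
  show thesis
  proof (rule that[of "sh t1" "sh t2"])
    show "{rotate t0 w ! 0, rotate t0 w ! 1} = {w ! t0, w ! nxt t0}"
      using nth_rot[of t0] nth_rot[of "nxt t0"] sh0 pos L0 unfolding nxt_def L_def by simp
  qed (use ord block pos in \<open>simp_all add: L_def\<close>)
qed

lemma blocks_at_positions_reducible_within:
  assumes gauss: "gauss_word w" and xyz: "distinct [x, y, z]"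
    and pos: "1 < q" "Suc q < r" "Suc r < length w"
    and blocks: "{w ! 0, w ! 1} = {x, y}" "{w ! q, w ! Suc q} = {y, z}" "{w ! r, w ! Suc r} = {z, x}"
    and type_A: "interlace_count w x y z = 2"
  shows "reducible_within w 2"
proof -
  obtain W1 W2 W3 where w: "w = w!0 # w!1 # W1 @ w!q # w!Suc q # W2 @ w!r # w!Suc r # W3"
    using split_at_three_blocks[OF pos] .
  show ?thesis
    using type_A_word_reducible_within[OF xyz, of "w!0" "w!1" W1 "w!q" "w!Suc q" W2 "w!r" "w!Suc r" W3]
      gauss blocks type_A unfolding w[symmetric] by simp
qed

(* If the edge carrying
   {z,x} comes before the one carrying {y,z}, the roles of x and y are exchanged. *)
lemma cyclic_blocks_reducible_within:
  fixes w :: "'a list"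
  defines "nxt \<equiv> \<lambda>t. Suc t mod length w"
  assumes gauss: "gauss_word w" and xyz: "distinct [x, y, z]"
    and pos: "t0 < length w" "t1 < length w" "t2 < length w"
    and six: "distinct [t0, nxt t0, t1, nxt t1, t2, nxt t2]"
    and blocks: "{w ! t0, w ! nxt t0} = {x, y}" "{w ! t1, w ! nxt t1} = {y, z}"
      "{w ! t2, w ! nxt t2} = {z, x}"
    and type_A: "interlace_count w x y z = 2"
  shows "reducible_within w 2"
proof -
  define w0 where "w0 = rotate t0 w"
  obtain q r where qr: "1 < q" "1 < r" "Suc q < length w0" "Suc r < length w0" "Suc q < r \<or> Suc r < q"
    and b: "{w0 ! 0, w0 ! 1} = {x, y}" "{w0 ! q, w0 ! Suc q} = {y, z}" "{w0 ! r, w0 ! Suc r} = {z, x}"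
    using rotated_block_positions[OF pos six[unfolded nxt_def]] blocks
    unfolding w0_def nxt_def by (metis length_rotate)
  have equiv: "word_equiv w w0" unfolding w0_def by (rule word_equiv_rotate)
  have gauss0: "gauss_word w0" using gauss_word_equiv[OF equiv] gauss by simp
  have count0: "interlace_count w0 a b c = interlace_count w a b c" for a b c
    unfolding interlace_count_def interlaced_word_equiv[OF equiv] ..
  have "reducible_within w0 2"
  proof (cases "Suc q < r")
    case True
    then show ?thesis
      using blocks_at_positions_reducible_within[OF gauss0 xyz qr(1) True qr(4) b] type_A count0 by simp
  next
    case False
    have "interlace_count w y x z = interlace_count w x y z"
      using xyz by (intro interlace_count_perm) auto
    moreover have "distinct [y, x, z]" "{w0 ! 0, w0 ! 1} = {y, x}" "{w0 ! r, w0 ! Suc r} = {x, z}"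
      "{w0 ! q, w0 ! Suc q} = {z, y}" using xyz b by auto
    ultimately show ?thesis
      using blocks_at_positions_reducible_within[OF gauss0, of y x z r q] False qr type_A count0 by simp
  qed
  then show ?thesis
    by (rule reducible_within_word_equiv[OF gauss0 word_equiv_rotate_back[of t0 w, folded w0_def]])
qed

section \<open>The three edges of a trigon\<close>

lemma count_two_positions:
  assumes "count_list w a = 2" "p \<noteq> p'" "p < length w" "p' < length w" "w ! p = a" "w ! p' = a"
    "k < length w" "w ! k = a"
  shows "k = p \<or> k = p'"
proof (rule ccontr)
  assume "\<not> (k = p \<or> k = p')"
  then have "card {p, p', k} = 3" using assms(2) by simp
  moreover have "{p, p', k} \<subseteq> {i. i < length w \<and> a = w ! i}" by (simp add: assms(3-8))
  then have "card {p, p', k} \<le> card {i. i < length w \<and> a = w ! i}" by (rule card_mono[rotated]) simp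
  moreover have "card {i. i < length w \<and> a = w ! i} = 2"
    using assms(1) unfolding count_list_eq_length_filter length_filter_conv_card .
  ultimately show False by simp
qed

context
  fixes w :: "'a list"
  assumes gauss: "gauss_word w"
begin

lemma partner_props:
  assumes "i < length w"
  shows "partner w i < length w" "partner w i \<noteq> i" "w ! partner w i = w ! i"
proof -
  have two: "count_list w (w ! i) = 2" using gauss assms unfolding gauss_word_def by simp
  then have "card {k. k < length w \<and> w ! i = w ! k} = 2"
    unfolding count_list_eq_length_filter length_filter_conv_card .
  then obtain u v where uv: "{k. k < length w \<and> w ! i = w ! k} = {u, v}" "u \<noteq> v"
    by (meson card_2_iff)
  then obtain j where j: "j < length w" "j \<noteq> i" "w ! j = w ! i"
    using assms by (metis (mono_tags, lifting) insert_iff mem_Collect_eq)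
  have "partner w i = j" unfolding partner_def
  proof (rule the_equality)
    fix k assume "k < length w \<and> k \<noteq> i \<and> w ! k = w ! i"
    then show "k = j" using count_two_positions[OF two j(2,1) assms j(3)] by auto
  qed (use j in simp)
  then show "partner w i < length w" "partner w i \<noteq> i" "w ! partner w i = w ! i" using j by auto
qed

lemma partner_partner:
  assumes "i < length w"
  shows "partner w (partner w i) = i"
proof -
  have p: "partner w i < length w" "partner w i \<noteq> i" "w ! partner w i = w ! i"
    using partner_props[OF assms] by auto
  have two: "count_list w (w ! i) = 2" using gauss assms unfolding gauss_word_def by simp
  have q: "partner w (partner w i) < length w" "partner w (partner w i) \<noteq> partner w i"
    "w ! partner w (partner w i) = w ! i"
    using partner_props[OF p(1)] p(3) by auto
  show ?thesis using count_two_positions[OF two p(2) p(1) assms p(3) refl q(1) q(3)] q(2) by simp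
qed

end

lemma funpow_maps_to:
  assumes "\<forall>x\<in>D. f x \<in> D" "x \<in> D"
  shows "(f ^^ n) x \<in> D"
  using assms by (induction n) auto

lemma funpow_inj_on:
  assumes "\<forall>x\<in>D. f x \<in> D" "inj_on f D" "x \<in> D" "y \<in> D" "(f ^^ n) x = (f ^^ n) y"
  shows "x = y"
  using assms(3-5)
proof (induction n arbitrary: x y)
  case (Suc n)
  then have "(f ^^ n) (f x) = (f ^^ n) (f y)" by (simp add: funpow_Suc_right del: funpow.simps)
  then have "f x = f y" using Suc.IH assms(1) Suc.prems(1,2) by blast
  then show ?case using assms(2) Suc.prems(1,2) by (meson inj_onD)
qed simp

lemma forward_orbit_period:
  assumes maps: "\<forall>x\<in>D. f x \<in> D" and inj: "inj_on f D" and d: "d \<in> D"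
    and card: "card {(f ^^ k) d | k. True} = n" "0 < n"
  shows "(f ^^ n) d = d" "{(f ^^ k) d | k. True} = (\<lambda>k. (f ^^ k) d) ` {..<n}"
proof -
  let ?h = "\<lambda>k. (f ^^ k) d"
  let ?O = "{(f ^^ k) d | k. True}"
  have fin: "finite ?O" using card by (intro card_ge_0_finite) simp
  have "\<not> inj_on ?h {..n}"
  proof
    assume "inj_on ?h {..n}"
    then have "card {..n} \<le> card ?O" by (intro card_inj_on_le[OF _ _ fin]) auto
    then show False using card by simp
  qed
  then obtain a b where ab: "a < b" "b \<le> n" "?h a = ?h b"
    unfolding inj_on_def by (metis atMost_iff linorder_neqE_nat)
  define p where "p = b - a"
  have "(f ^^ a) ((f ^^ p) d) = (f ^^ (a + p)) d" by (simp add: funpow_add)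
  also have "\<dots> = (f ^^ a) d" using ab unfolding p_def by simp
  finally have "(f ^^ a) ((f ^^ p) d) = (f ^^ a) d" .
  then have per: "(f ^^ p) d = d" using funpow_inj_on[OF maps inj] funpow_maps_to[OF maps d] d by blast
  have cover: "?O \<subseteq> ?h ` {..<p}"
  proof
    fix x assume "x \<in> ?O"
    then obtain k where "x = ?h k" by blast
    then have "x = ?h (k mod p)" using funpow_mod_eq[OF per] by simp
    moreover have "k mod p < p" using ab unfolding p_def by simp
    ultimately show "x \<in> ?h ` {..<p}" by blast
  qed
  then have "n \<le> p" using card(1) card_image_le[of "{..<p}" ?h] card_mono[OF _ cover] by simp
  then have "p = n" using ab unfolding p_def by simp
  then show "(f ^^ n) d = d" "?O = ?h ` {..<n}" using per cover by auto
qed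

lemma alpha_props:
  assumes "d \<in> darts w"
  shows "alpha w d \<in> darts w"
    "fst (alpha w d) = Suc (fst d) mod length w \<or> fst d = Suc (fst (alpha w d)) mod length w"
proof -
  obtain i b where d: "d = (i, b)" by (cases d)
  have i: "i < length w" using assms d unfolding darts_def by simp
  then have "0 < length w" by linarith
  then show "alpha w d \<in> darts w" unfolding darts_def alpha_def d Let_def by auto
  have "i = Suc ((i + length w - 1) mod length w) mod length w"
    using i by (cases i) simp_all
  then show "fst (alpha w d) = Suc (fst d) mod length w \<or> fst d = Suc (fst (alpha w d)) mod length w"
    unfolding alpha_def d Let_def by simp
qed

lemma alpha_inj: "inj_on (alpha w) (darts w)"
proof (rule inj_onI)
  fix d d' assume dd: "d \<in> darts w" "d' \<in> darts w" "alpha w d = alpha w d'"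
  obtain i b i' b' where d: "d = (i, b)" "d' = (i', b')" by (cases d, cases d')
  have i: "i < length w" "i' < length w" using dd d unfolding darts_def by auto
  have "b = b'" using dd(3) unfolding d alpha_def Let_def by (auto split: if_splits)
  moreover have "i = i'"
  proof (cases b)
    case True
    then have "Suc i mod length w = Suc i' mod length w"
      using dd(3) \<open>b = b'\<close> unfolding d alpha_def Let_def by simp
    then show ?thesis using i by (auto simp: mod_Suc split: if_splits)
  next
    case False
    have pred: "(k + length w - 1) mod length w = (if k = 0 then length w - 1 else k - 1)"
      if "k < length w" for k
      using that by (cases k) simp_all
    have "(i + length w - 1) mod length w = (i' + length w - 1) mod length w"
      using dd(3) \<open>b = b'\<close> False unfolding d alpha_def Let_def by simp
    then show ?thesis using pred[OF i(1)] pred[OF i(2)] i by (auto split: if_splits)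
  qed
  ultimately show "d = d'" using d by simp
qed

context
  fixes w :: "'a list"
  assumes gauss: "gauss_word w"
begin

lemma sigma_inj: "inj_on (sigma w s) (darts w)"
proof (rule inj_onI)
  fix d d' assume dd: "d \<in> darts w" "d' \<in> darts w" "sigma w s d = sigma w s d'"
  obtain i b i' b' where d: "d = (i, b)" "d' = (i', b')" by (cases d, cases d')
  have i: "i < length w" "i' < length w" using dd d unfolding darts_def by auto
  have "partner w i = partner w i'" using dd(3) unfolding d sigma_def by simp
  then have "i = i'" using partner_partner[OF gauss i(1)] partner_partner[OF gauss i(2)] by metis
  moreover have "b = b'"
    using dd(3) \<open>i = i'\<close> unfolding d sigma_def by (cases b; cases b') simp_all
  ultimately show "d = d'" using d by simp
qed

(* The face permutation is injective on darts, so regions are cycles of darts. *)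
lemma face_perm_darts: "\<forall>d\<in>darts w. face_perm w s d \<in> darts w"
proof
  fix d assume "d \<in> darts w"
  then have "fst (alpha w d) < length w"
    using alpha_props(1)[of d w] unfolding darts_def by (simp add: mem_Times_iff)
  then show "face_perm w s d \<in> darts w"
    using partner_props(1)[OF gauss] unfolding face_perm_def sigma_def darts_def by simp
qed

lemma face_perm_inj: "inj_on (face_perm w s) (darts w)"
  unfolding face_perm_def
proof (rule comp_inj_on[OF alpha_inj])
  show "inj_on (sigma w s) (alpha w ` darts w)"
    by (rule inj_on_subset[OF sigma_inj]) (use alpha_props(1) in auto)
qed

end

lemma trigon_three_darts:
  assumes gauss: "gauss_word w" and trigon: "is_trigon w s R"
  obtains d where "d \<in> darts w" "R = {d, face_perm w s d, face_perm w s (face_perm w s d)}"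
    "face_perm w s (face_perm w s (face_perm w s d)) = d"
proof -
  let ?f = "face_perm w s"
  obtain d where d: "d \<in> darts w" "R = {(?f ^^ k) d | k. True}"
    using trigon unfolding is_trigon_def regions_def face_of_def by blast
  have card: "card {(?f ^^ k) d | k. True} = 3" using trigon d(2) unfolding is_trigon_def by simp
  note period = forward_orbit_period[OF face_perm_darts[OF gauss] face_perm_inj[OF gauss] d(1) card]
  have "(\<lambda>k. (?f ^^ k) d) ` {..<3} = {d, ?f d, ?f (?f d)}"
    by (auto simp: numeral_3_eq_3 lessThan_Suc numeral_2_eq_2)
  then show thesis using that d period by (simp add: numeral_3_eq_3)
qed

lemma edge_start:
  assumes "i < L" "j < L" "j = Suc i mod L \<or> i = Suc j mod L"
  obtains t where "t < L" "{t, Suc t mod L} = {i, j}"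
  using assms by (metis insert_commute)

(* Each of the three edges of a trigon joins cyclically adjacent passages i_k and j_k, and
   consecutive edges meet at a crossing, so j_k and i_(k+1) are its two passages. *)
lemma trigon_corners:
  assumes gauss: "gauss_word w" and trigon: "is_trigon w s R"
  obtains i0 j0 i1 j1 i2 j2 where
    "i0 < length w" "j0 < length w" "i1 < length w" "j1 < length w" "i2 < length w" "j2 < length w"
    "j0 = Suc i0 mod length w \<or> i0 = Suc j0 mod length w"
    "j1 = Suc i1 mod length w \<or> i1 = Suc j1 mod length w"
    "j2 = Suc i2 mod length w \<or> i2 = Suc j2 mod length w"
    "w ! j0 = w ! i1" "w ! j1 = w ! i2" "w ! j2 = w ! i0" "j0 \<noteq> i1" "j1 \<noteq> i2" "j2 \<noteq> i0"
    "trigon_crossings w R = {w ! i0, w ! i1, w ! i2}"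
proof -
  let ?f = "face_perm w s"
  obtain d0 where d0: "d0 \<in> darts w" "R = {d0, ?f d0, ?f (?f d0)}" "?f (?f (?f d0)) = d0"
    using trigon_three_darts[OF gauss trigon] .
  define d1 where "d1 = ?f d0"
  define d2 where "d2 = ?f d1"
  have darts: "d0 \<in> darts w" "d1 \<in> darts w" "d2 \<in> darts w"
    using face_perm_darts[OF gauss] d0(1) unfolding d1_def d2_def by auto
  define i0 i1 i2 where "i0 = fst d0" "i1 = fst d1" "i2 = fst d2"
  define j0 j1 j2 where "j0 = fst (alpha w d0)" "j1 = fst (alpha w d1)" "j2 = fst (alpha w d2)"
  have j_lt: "j0 < length w" "j1 < length w" "j2 < length w"
    using alpha_props(1) darts unfolding j0_j1_j2_def darts_def by (simp_all add: mem_Times_iff)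
  have fst_f: "fst (?f d) = partner w (fst (alpha w d))" for d
    unfolding face_perm_def sigma_def by simp
  have "i0 = fst (?f d2)" using d0(3) unfolding i0_i1_i2_def d2_def d1_def by simp
  then have partners: "i1 = partner w j0" "i2 = partner w j1" "i0 = partner w j2"
    using fst_f unfolding i0_i1_i2_def j0_j1_j2_def d1_def d2_def by simp_all
  have i_lt: "i0 < length w" "i1 < length w" "i2 < length w"
    using darts unfolding i0_i1_i2_def darts_def by auto
  have adj: "j0 = Suc i0 mod length w \<or> i0 = Suc j0 mod length w"
    "j1 = Suc i1 mod length w \<or> i1 = Suc j1 mod length w"
    "j2 = Suc i2 mod length w \<or> i2 = Suc j2 mod length w"
    using alpha_props(2) darts unfolding i0_i1_i2_def j0_j1_j2_def by blast+
  have letters: "w ! j0 = w ! i1" "w ! j1 = w ! i2" "w ! j2 = w ! i0"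
    unfolding partners using partner_props(3)[OF gauss] j_lt by simp_all
  have ne: "j0 \<noteq> i1" "j1 \<noteq> i2" "j2 \<noteq> i0"
    unfolding partners using not_sym[OF partner_props(2)[OF gauss]] j_lt by simp_all
  have "trigon_crossings w R = {w ! i0, w ! i1, w ! i2}"
    unfolding trigon_crossings_def d0(2) i0_i1_i2_def d1_def d2_def by simp
  with i_lt j_lt adj letters ne show thesis by (intro that) simp_all
qed

lemma trigon_blocks:
  fixes w :: "'a list"
  defines "nxt \<equiv> \<lambda>t. Suc t mod length w"
  assumes gauss: "gauss_word w" and trigon: "is_trigon w s R"
    and three: "card (trigon_crossings w R) = 3"
  obtains t0 t1 t2 c0 c1 c2 where "trigon_crossings w R = {c0, c1, c2}" "distinct [c0, c1, c2]"
    "t0 < length w" "t1 < length w" "t2 < length w"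
    "distinct [t0, nxt t0, t1, nxt t1, t2, nxt t2]"
    "{w ! t0, w ! nxt t0} = {c0, c1}" "{w ! t1, w ! nxt t1} = {c1, c2}" "{w ! t2, w ! nxt t2} = {c2, c0}"
proof -
  obtain i0 j0 i1 j1 i2 j2 where lt: "i0 < length w" "j0 < length w" "i1 < length w"
      "j1 < length w" "i2 < length w" "j2 < length w"
    and adj: "j0 = Suc i0 mod length w \<or> i0 = Suc j0 mod length w"
      "j1 = Suc i1 mod length w \<or> i1 = Suc j1 mod length w"
      "j2 = Suc i2 mod length w \<or> i2 = Suc j2 mod length w"
    and letters: "w ! j0 = w ! i1" "w ! j1 = w ! i2" "w ! j2 = w ! i0"
    and ne: "j0 \<noteq> i1" "j1 \<noteq> i2" "j2 \<noteq> i0"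
    and crossings: "trigon_crossings w R = {w ! i0, w ! i1, w ! i2}"
    using trigon_corners[OF gauss trigon] .
  have c: "distinct [w ! i0, w ! i1, w ! i2]"
    using three unfolding crossings by (auto simp: card_insert_if split: if_splits)
  then have "distinct [i0, j0, i1, j1, i2, j2]" using letters ne by auto
  obtain t0 t1 t2 where t: "t0 < length w" "{t0, nxt t0} = {i0, j0}" "t1 < length w"
    "{t1, nxt t1} = {i1, j1}" "t2 < length w" "{t2, nxt t2} = {i2, j2}"
    using edge_start[OF lt(1,2) adj(1)] edge_start[OF lt(3,4) adj(2)] edge_start[OF lt(5,6) adj(3)]
    unfolding nxt_def by metis
  show thesis
  proof (rule that[OF crossings c t(1,3,5)])
    show "distinct [t0, nxt t0, t1, nxt t1, t2, nxt t2]"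
      using \<open>distinct [i0, j0, i1, j1, i2, j2]\<close> t(2,4,6) by (auto simp: doubleton_eq_iff)
    show "{w ! t0, w ! nxt t0} = {w ! i0, w ! i1}" "{w ! t1, w ! nxt t1} = {w ! i1, w ! i2}"
      "{w ! t2, w ! nxt t2} = {w ! i2, w ! i0}"
      using t(2,4,6) letters by (auto simp: doubleton_eq_iff)
  qed
qed

theorem mainTheorem4:
  fixes w :: "'a list" and s :: "nat \<Rightarrow> bool"
  assumes "spherical_curve w s"
    and "\<exists>R. trigon_type_A w s R"
  shows "reductivity w \<le> 2"
proof -
  have gauss: "gauss_word w" using assms(1) unfolding spherical_curve_def gauss_word_def by blast
  obtain R x y z where trigon: "is_trigon w s R" and xyz: "distinct [x, y, z]"
    and crossings: "trigon_crossings w R = {x, y, z}" and type_A: "interlace_count w x y z = 2"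
    using assms(2) unfolding trigon_type_A_def interlace_count_def by blast
  have "card (trigon_crossings w R) = 3" using xyz crossings by simp
  then obtain t0 t1 t2 c0 c1 c2 where c: "trigon_crossings w R = {c0, c1, c2}" "distinct [c0, c1, c2]"
    and blocks: "t0 < length w" "t1 < length w" "t2 < length w"
      "distinct [t0, Suc t0 mod length w, t1, Suc t1 mod length w, t2, Suc t2 mod length w]"
      "{w ! t0, w ! (Suc t0 mod length w)} = {c0, c1}" "{w ! t1, w ! (Suc t1 mod length w)} = {c1, c2}"
      "{w ! t2, w ! (Suc t2 mod length w)} = {c2, c0}"
    by (rule trigon_blocks[OF gauss trigon])
  have "interlace_count w c0 c1 c2 = 2"
    using type_A interlace_count_perm[OF c(2) xyz] c(1) crossings by simp
  then have "reducible_within w 2"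
    by (intro cyclic_blocks_reducible_within[OF gauss c(2) blocks])
  then show ?thesis by (rule reductivity_le)
qed
end
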